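(* Let $\mathcal V\cong\mathbb R^d$ be a finite-dimensional real normed space, $\mathcal X\subseteq\mathcal V$ convex, and $f:\mathcal V\to\mathbb R\cup\{+\infty\}$ proper, lower semicontinuous and convex with $\operatorname{dom} f=\mathcal X$ and nonempty solution set. Let $h$ be a Bregman function on $\mathcal X$ and suppose $f$ is relatively continuous with constant $G$. Then the Bregman residuals $\delta_t$ of AdaMir run with perfect (sub)gradients satisfy $\delta_t^2\le2G^2$ for all $t\ge1$.
   Context: $\mathcal V^*$ denotes the dual space with pairing $\langle\cdot,\cdot\rangle$. For $x\in\operatorname{dom}\partial f$, $\nabla f(x)$ denotes a fixed selection of $\partial f(x)$. A Bregman function on $\mathcal X$ is a convex lower semicontinuous $h:\mathcal V\to\mathbb R\cup\{+\infty\}$ with $\operatorname{dom}\partial h\subseteq\mathcal X\subseteq\operatorname{dom}h$, whose subdifferential admits a continuous selection $\nabla h(x)\in\partial h(x)$ on $\operatorname{dom}\partial h$, and which is $K$-strongly convex for some $K>0$: $h(x')\ge h(x)+\langle\nabla h(x),x'-x\rangle+\frac K2\|x'-x\|^2$ for all $x,x'\in\operatorname{dom}\partial h$. Bregman divergence: $D(p,x)=h(p)-h(x)-\langle\nabla h(x),p-x\rangle$; prox-mapping: $P_x(y)=\arg\min_{x'\in\mathcal X}\{\langle y,x-x'\rangle+D(x',x)\}$ for $x\in\operatorname{dom}\partial h$, $y\in\mathcal V^*$. AdaMir with perfect gradients: pick $x_0\neq x_1$ in $\operatorname{dom}\partial h$, $\delta_0=[D(x_0,x_1)+D(x_1,x_0)]^{1/2}$.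 For $t=1,2,\dots$: $\gamma_t=\big(\sum_{s=0}^{t-1}\delta_s^2\big)^{-1/2}$, $x_{t+1}=P_{x_t}(-\gamma_t\nabla f(x_t))$, $\delta_t=[D(x_t,x_{t+1})+D(x_{t+1},x_t)]^{1/2}/\gamma_t$. $f$ is relatively continuous with constant $G>0$ if $f(x)-f(x')\le\langle\nabla f(x),x-x'\rangle\le G\sqrt{2D(x',x)}$ for all $x\in\operatorname{dom}\partial h$, $x'\in\operatorname{dom}h$. *)

theory Defs
  imports "HOL-Analysis.Analysis"
begin

text \<open>The finite-dimensional space V is modelled by a type of class euclidean_space;
  its dual V* is identified with V via the inner product, so the pairing
  between a dual vector y and a primal vector x is the inner product y \<bullet> x.
  The norm of V is an arbitrary norm function nrm (not necessarily the Euclidean one).\<close>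

definition is_norm :: "('a::real_vector \<Rightarrow> real) \<Rightarrow> bool" where
  "is_norm N \<longleftrightarrow> (\<forall>x. N x \<ge> 0) \<and> (\<forall>x. N x = 0 \<longleftrightarrow> x = 0) \<and>
     (\<forall>c x. N (c *\<^sub>R x) = \<bar>c\<bar> * N x) \<and> (\<forall>x y. N (x + y) \<le> N x + N y)"

definition edom :: "('a \<Rightarrow> ereal) \<Rightarrow> 'a set" where
  "edom f = {x. f x < \<infinity>}"

definition proper_fun :: "('a \<Rightarrow> ereal) \<Rightarrow> bool" where
  "proper_fun f \<longleftrightarrow> (\<forall>x. f x \<noteq> -\<infinity>) \<and> edom f \<noteq> {}"

definition lsc_fun :: "('a::topological_space \<Rightarrow> ereal) \<Rightarrow> bool" where
  "lsc_fun f \<longleftrightarrow> (\<forall>a. closed {x. f x \<le> a})"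

definition convex_fun :: "('a::real_vector \<Rightarrow> ereal) \<Rightarrow> bool" where
  "convex_fun f \<longleftrightarrow> (\<forall>x y t. 0 < t \<and> t < 1 \<longrightarrow>
      f ((1 - t) *\<^sub>R x + t *\<^sub>R y) \<le> ereal (1 - t) * f x + ereal t * f y)"

definition subdiff :: "('a::real_inner \<Rightarrow> ereal) \<Rightarrow> 'a \<Rightarrow> 'a set" where
  "subdiff f x = {g. f x < \<infinity> \<and> (\<forall>x'. f x' \<ge> f x + ereal (g \<bullet> (x' - x)))}"

definition dom_subdiff :: "('a::real_inner \<Rightarrow> ereal) \<Rightarrow> 'a set" where
  "dom_subdiff f = {x. subdiff f x \<noteq> {}}"

definition bregman_function ::
  "('a::real_inner \<Rightarrow> real) \<Rightarrow> 'a set \<Rightarrow> ('a \<Rightarrow> ereal) \<Rightarrow> ('a \<Rightarrow> 'a) \<Rightarrow> bool" where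
  "bregman_function N X h gh \<longleftrightarrow>
     convex_fun h \<and> lsc_fun h \<and> (\<forall>x. h x \<noteq> -\<infinity>) \<and>
     dom_subdiff h \<subseteq> X \<and> X \<subseteq> edom h \<and>
     (\<forall>x\<in>dom_subdiff h. gh x \<in> subdiff h x) \<and>
     continuous_on (dom_subdiff h) gh \<and>
     (\<exists>K>0. \<forall>x\<in>dom_subdiff h. \<forall>x'\<in>dom_subdiff h.
        h x' \<ge> h x + ereal (gh x \<bullet> (x' - x)) + ereal (K / 2 * (N (x' - x))\<^sup>2))"

definition breg :: "('a::real_inner \<Rightarrow> ereal) \<Rightarrow> ('a \<Rightarrow> 'a) \<Rightarrow> 'a \<Rightarrow> 'a \<Rightarrow> ereal" where
  "breg h gh p x = h p - h x - ereal (gh x \<bullet> (p - x))"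

definition prox :: "'a set \<Rightarrow> ('a::real_inner \<Rightarrow> ereal) \<Rightarrow> ('a \<Rightarrow> 'a) \<Rightarrow> 'a \<Rightarrow> 'a \<Rightarrow> 'a" where
  "prox X h gh x y = (SOME x'. x' \<in> X \<and>
      (\<forall>z\<in>X. ereal (y \<bullet> (x - x')) + breg h gh x' x \<le> ereal (y \<bullet> (x - z)) + breg h gh z x))"

definition rel_continuous ::
  "('a::real_inner \<Rightarrow> ereal) \<Rightarrow> ('a \<Rightarrow> 'a) \<Rightarrow> ('a \<Rightarrow> ereal) \<Rightarrow> ('a \<Rightarrow> 'a) \<Rightarrow> real \<Rightarrow> bool" where
  "rel_continuous f gf h gh G \<longleftrightarrow>
     (\<forall>x\<in>dom_subdiff h. \<forall>x'\<in>edom h.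
        f x - f x' \<le> ereal (gf x \<bullet> (x - x')) \<and>
        gf x \<bullet> (x - x') \<le> G * sqrt (2 * real_of_ereal (breg h gh x' x)))"

end

theory Submission
  imports Defs
begin

text \<open>Write c = \<nabla>h(q) - \<gamma>\<nabla>f(q) for a step from q to p = P_q(-\<gamma>\<nabla>f(q)).
  On X the prox objective is h - \<langle>c,\<cdot>\<rangle> up to a constant, and h - \<langle>c,\<cdot>\<rangle> attains its
  minimum (h is lower semicontinuous and, by strong convexity, coercive), so c \<in> \<partial>h(p).
  The selection \<nabla>h(p) may differ from c, but dom \<partial>h is dense in dom h (proximal points
  of h), so monotonicity of \<partial>h and continuity of \<nabla>h give \<langle>\<nabla>h(p) - c, q - p\<rangle> \<ge> 0.
  Therefore D(q,p) + D(p,q) = \<langle>\<nabla>h(q) - \<nabla>h(p), q - p\<rangle> \<le> \<gamma>\<langle>\<nabla>f(q), q - p\<rangle>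
  \<le> \<gamma>G sqrt(2 D(p,q)) \<le> \<gamma>G sqrt(2 (D(q,p) + D(p,q))), that is
  \<delta>^2 = (D(q,p) + D(p,q))/\<gamma>^2 \<le> 2G^2.\<close>

lemma is_norm_convex_on:
  assumes "is_norm N"
  shows "convex_on UNIV N"
proof
  fix t :: real and u v
  assume "0 < t" "t < 1"
  then show "N ((1 - t) *\<^sub>R u + t *\<^sub>R v) \<le> (1 - t) * N u + t * N v"
    using assms unfolding is_norm_def by (metis abs_of_pos diff_gt_0_iff_gt)
qed simp

lemma is_norm_continuous:
  fixes N :: "'a::euclidean_space \<Rightarrow> real"
  assumes "is_norm N"
  shows "continuous_on UNIV N"
  using convex_on_continuous[OF open_UNIV is_norm_convex_on[OF assms]] .

lemma is_norm_ge_norm: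
  fixes N :: "'a::euclidean_space \<Rightarrow> real"
  assumes "is_norm N"
  obtains m where "m > 0" "\<And>v. m * norm v \<le> N v"
proof -
  have "sphere (0::'a) 1 \<noteq> {}" by simp
  then obtain u where u: "u \<in> sphere (0::'a) 1" "\<forall>v\<in>sphere 0 1. N u \<le> N v"
    using continuous_attains_inf[OF compact_sphere _ continuous_on_subset[OF is_norm_continuous[OF assms] subset_UNIV]]
    by blast
  have "N u > 0"
    using u(1) assms unfolding is_norm_def by (metis less_eq_real_def norm_zero mem_sphere_0 zero_neq_one)
  moreover have "N u * norm v \<le> N v" for v
  proof (cases "v = 0")
    case False
    then have "N u \<le> N ((1 / norm v) *\<^sub>R v)" using u by simp
    with False show ?thesis using assms unfolding is_norm_def by (simp add: field_simps)
  qed (use assms in \<open>simp add: is_norm_def\<close>)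
  ultimately show thesis using that by blast
qed

lemma lsc_fun_iff_open: "lsc_fun f \<longleftrightarrow> (\<forall>a. open {x. a < f x})"
  unfolding lsc_fun_def closed_def by (simp add: Compl_eq not_le)

lemma lsc_fun_add_continuous:
  fixes h :: "'a::topological_space \<Rightarrow> ereal"
  assumes "lsc_fun h" and "continuous_on UNIV g"
  shows "lsc_fun (\<lambda>y. h y + ereal (g y))"
proof -
  have "{y. a < h y + ereal (g y)} = (\<Union>b. {y. ereal b < h y} \<inter> {y. a < ereal (b + g y)})" for a
  proof (intro set_eqI iffI)
    fix y assume "y \<in> {y. a < h y + ereal (g y)}"
    then have "a - ereal (g y) < h y" by (simp add: ereal_minus_less_iff)
    then obtain b where "a - ereal (g y) < ereal b" "ereal b < h y" using ereal_dense2 by blast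
    then show "y \<in> (\<Union>b. {y. ereal b < h y} \<inter> {y. a < ereal (b + g y)})"
      by (auto simp: ereal_minus_less_iff)
  next
    fix y assume "y \<in> (\<Union>b. {y. ereal b < h y} \<inter> {y. a < ereal (b + g y)})"
    then obtain b where "ereal b < h y" "a < ereal b + ereal (g y)" by auto
    moreover from \<open>ereal b < h y\<close> have "ereal b + ereal (g y) < h y + ereal (g y)"
      by (cases "h y") auto
    ultimately show "y \<in> {y. a < h y + ereal (g y)}" by simp
  qed
  moreover have "open {y. a < ereal (b + g y)}" for a b
    by (intro open_Collect_less continuous_on_const continuous_on_ereal continuous_on_add assms(2))
  ultimately show ?thesis using assms(1) unfolding lsc_fun_iff_open by (simp add: open_Int open_UN)
qed

lemma lsc_fun_attains_min_on_compact:
  fixes F :: "'a::topological_space \<Rightarrow> ereal"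
  assumes "lsc_fun F" and "compact C" and "C \<noteq> {}"
  obtains y where "y \<in> C" "\<And>z. z \<in> C \<Longrightarrow> F y \<le> F z"
proof -
  define m where "m = (INF z\<in>C. F z)"
  have "C \<inter> (\<Inter>a\<in>{a. m < a}. {x. F x \<le> a}) \<noteq> {}"
  proof (rule compact_imp_fip_image[OF assms(2)])
    show "closed {x. F x \<le> a}" for a using assms(1) unfolding lsc_fun_def by blast
  next
    fix I assume I: "finite I" "I \<subseteq> {a. m < a}"
    show "C \<inter> (\<Inter>a\<in>I. {x. F x \<le> a}) \<noteq> {}"
    proof (cases "I = {}")
      case False
      with I have "m < Min I" by auto
      then obtain x where "x \<in> C" "F x < Min I" unfolding m_def by (auto simp: INF_less_iff)
      with I have "\<forall>a\<in>I. F x \<le> a" by (meson Min_le less_imp_le order_trans)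
      with \<open>x \<in> C\<close> show ?thesis by blast
    qed (use assms(3) in simp)
  qed
  then obtain y where y: "y \<in> C" "\<And>a. m < a \<Longrightarrow> F y \<le> a" by blast
  have "F y \<le> m"
    using y(2) by (metis dense not_le order.strict_iff_not)
  moreover have "m \<le> F z" if "z \<in> C" for z unfolding m_def using that by (rule INF_lower)
  ultimately show thesis using that y(1) by (meson order_trans)
qed

lemma lsc_fun_attains_min:
  fixes F :: "'a::heine_borel \<Rightarrow> ereal"
  assumes "lsc_fun F" and "\<And>w. F w \<le> F x0 \<Longrightarrow> dist x0 w \<le> R"
  obtains y where "\<And>w. F y \<le> F w"
proof -
  have "R \<ge> 0" using assms(2)[of x0] by simp
  then obtain y where y: "y \<in> cball x0 R" "\<And>z. z \<in> cball x0 R \<Longrightarrow> F y \<le> F z"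
    using lsc_fun_attains_min_on_compact[OF assms(1) compact_cball] by (metis cball_eq_empty not_less)
  have "F y \<le> F w" for w
  proof (cases "w \<in> cball x0 R")
    case False
    then have "F x0 < F w" by (meson assms(2) mem_cball not_le)
    moreover have "F y \<le> F x0" using y \<open>R \<ge> 0\<close> by simp
    ultimately show ?thesis by simp
  qed (use y in blast)
  then show thesis using that by blast
qed

lemma convex_funD_ereal:
  assumes "convex_fun h" "h x = ereal a" "h y = ereal b" "0 < t" "t < 1"
  shows "h ((1 - t) *\<^sub>R x + t *\<^sub>R y) \<le> ereal ((1 - t) * a + t * b)"
  using assms unfolding convex_fun_def by (metis times_ereal.simps(1) plus_ereal.simps(1))

lemma subdiffD:
  assumes "g \<in> subdiff h x"
  shows "h x + ereal (g \<bullet> (x' - x)) \<le> h x'"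
  using assms unfolding subdiff_def by blast

lemma subdiff_finite:
  assumes "g \<in> subdiff h x" and "\<forall>z. h z \<noteq> -\<infinity>"
  obtains a where "h x = ereal a"
  using assms unfolding subdiff_def by (cases "h x") auto

lemma subdiff_monotone:
  assumes "\<forall>z. h z \<noteq> -\<infinity>" and "u \<in> subdiff h a" and "v \<in> subdiff h b"
  shows "(u - v) \<bullet> (a - b) \<ge> 0"
proof -
  obtain ha hb where "h a = ereal ha" "h b = ereal hb"
    using subdiff_finite assms by metis
  moreover have "h a + ereal (u \<bullet> (b - a)) \<le> h b" "h b + ereal (v \<bullet> (a - b)) \<le> h a"
    using subdiffD[OF assms(2)] subdiffD[OF assms(3)] by blast+
  ultimately show ?thesis by (simp add: inner_diff_left inner_diff_right)
qed

lemma subdiff_iff_minimizer: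
  assumes "h p = ereal a"
  shows "c \<in> subdiff h p \<longleftrightarrow> (\<forall>w. h p + ereal (- (c \<bullet> p)) \<le> h w + ereal (- (c \<bullet> w)))"
proof -
  have "h p + ereal (c \<bullet> (w - p)) \<le> h w \<longleftrightarrow>
      h p + ereal (- (c \<bullet> p)) \<le> h w + ereal (- (c \<bullet> w))" for w
    using assms by (cases "h w") (auto simp: inner_diff_right)
  then show ?thesis using assms unfolding subdiff_def by auto
qed

lemma subdiff_of_proximal_minimizer:
  fixes h :: "'a::real_inner \<Rightarrow> ereal"
  assumes conv: "convex_fun h" and nm: "\<forall>z. h z \<noteq> -\<infinity>" and lam: "lam > 0"
    and hy: "h y = ereal ay"
    and min: "\<And>w. h y + ereal ((norm (y - z))\<^sup>2 / (2 * lam)) \<le> h w + ereal ((norm (w - z))\<^sup>2 / (2 * lam))"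
  shows "(1 / lam) *\<^sub>R (z - y) \<in> subdiff h y"
proof -
  have "h y + ereal (((1 / lam) *\<^sub>R (z - y)) \<bullet> (w - y)) \<le> h w" for w
  proof (cases "h w")
    case (real bw)
    define I where "I = (y - z) \<bullet> (w - y)"
    define D where "D = (norm (w - y))\<^sup>2 / (2 * lam)"
    have "ay - I / lam - s * D \<le> bw" if s: "0 < s" "s < 1" for s
    proof -
      define ws where "ws = (1 - s) *\<^sub>R y + s *\<^sub>R w"
      have "(norm (ws - z))\<^sup>2 = (norm (y - z))\<^sup>2 + 2 * s * I + s\<^sup>2 * (norm (w - y))\<^sup>2"
        unfolding ws_def I_def power2_norm_eq_inner
        by (simp add: algebra_simps inner_add_left inner_add_right inner_diff_left inner_diff_right
            inner_commute power2_eq_square)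
      moreover have "h ws \<le> ereal ((1 - s) * ay + s * bw)"
        unfolding ws_def by (rule convex_funD_ereal[OF conv hy real s])
      then have "ay + (norm (y - z))\<^sup>2 / (2 * lam) \<le> (1 - s) * ay + s * bw + (norm (ws - z))\<^sup>2 / (2 * lam)"
        using min[of ws] hy by (cases "h ws") auto
      ultimately have "s * ay \<le> s * (bw + I / lam + s * D)"
        using lam by (simp add: D_def field_simps power2_eq_square)
      then show ?thesis using s(1) by simp
    qed
    then have "\<forall>\<^sub>F s in at_right 0. ay - I / lam - s * D \<le> bw"
      unfolding eventually_at_right_field by (intro exI[of _ 1]) auto
    moreover have "((\<lambda>s. ay - I / lam - s * D) \<longlongrightarrow> ay - I / lam - 0 * D) (at_right 0)"
      by (intro tendsto_intros)
    ultimately have "ay - I / lam \<le> bw" using tendsto_upperbound by fastforce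
    moreover have "((1 / lam) *\<^sub>R (z - y)) \<bullet> (w - y) = - I / lam"
      unfolding I_def by (simp add: inner_diff_left diff_divide_distrib)
    ultimately show ?thesis using hy real by simp
  qed (use nm in auto)
  then show ?thesis unfolding subdiff_def using hy by auto
qed

lemma quadratic_le_imp_le_add_sqrt:
  fixes r A B :: real
  assumes "r \<ge> 0" "A \<ge> 0" "B \<ge> 0" "r\<^sup>2 \<le> A + B * r"
  shows "r \<le> B + sqrt A"
proof (rule ccontr)
  assume "\<not> r \<le> B + sqrt A"
  then have "sqrt A < r - B" by simp
  moreover have "0 \<le> sqrt A" using assms(2) by simp
  ultimately have "sqrt A * sqrt A < (r - B) * r"
    using assms(3) by (intro mult_strict_mono) linarith+
  with assms show False by (simp add: power2_eq_square algebra_simps)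
qed

lemma proximal_point_exists:
  fixes h :: "'a::euclidean_space \<Rightarrow> ereal"
  assumes conv: "convex_fun h" and lsc: "lsc_fun h" and nm: "\<forall>z. h z \<noteq> -\<infinity>"
    and b: "b \<in> subdiff h p0" and hp0: "h p0 = ereal a0" and hz: "h z = ereal az" and lam: "lam > 0"
  obtains y where "y \<in> dom_subdiff h" "h y \<le> h z"
    "norm (y - z) \<le> 2 * lam * norm b + sqrt (2 * lam * (az - a0 - b \<bullet> (z - p0)))"
proof -
  define A where "A = az - a0 - b \<bullet> (z - p0)"
  define F where "F w = h w + ereal ((norm (w - z))\<^sup>2 / (2 * lam))" for w
  have A: "A \<ge> 0" using subdiffD[OF b, of z] hz hp0 unfolding A_def by simp
  have lscF: "lsc_fun F"
    unfolding F_def by (rule lsc_fun_add_continuous[OF lsc]) (use lam in \<open>intro continuous_intros; auto\<close>)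
  have bound: "dist z w \<le> 2 * lam * norm b + sqrt (2 * lam * A)" if Fw: "F w \<le> F z" for w
  proof -
    obtain aw where aw: "h w = ereal aw" using Fw nm hz unfolding F_def by (cases "h w") auto
    define r where "r = norm (w - z)"
    have "aw + r\<^sup>2 / (2 * lam) \<le> az" using Fw aw hz unfolding F_def r_def by simp
    moreover have "a0 + b \<bullet> (w - p0) \<le> aw" using subdiffD[OF b, of w] aw hp0 by simp
    moreover have "b \<bullet> (z - w) \<le> norm b * r"
      unfolding r_def by (metis norm_cauchy_schwarz norm_minus_commute)
    ultimately have "r\<^sup>2 / (2 * lam) \<le> A + norm b * r"
      unfolding A_def by (simp add: inner_diff_right)
    then have "r\<^sup>2 \<le> 2 * lam * A + 2 * lam * norm b * r" using lam by (simp add: field_simps)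
    then have "r \<le> 2 * lam * norm b + sqrt (2 * lam * A)"
      using quadratic_le_imp_le_add_sqrt lam A by (simp add: r_def)
    then show ?thesis by (simp add: dist_norm r_def norm_minus_commute)
  qed
  obtain y where y: "\<And>w. F y \<le> F w" using lsc_fun_attains_min[OF lscF bound] by blast
  then have Fy: "F y \<le> F z" .
  then obtain ay where ay: "h y = ereal ay" using nm hz unfolding F_def by (cases "h y") auto
  have "(1 / lam) *\<^sub>R (z - y) \<in> subdiff h y"
    by (rule subdiff_of_proximal_minimizer[OF conv nm lam ay]) (use y in \<open>simp add: F_def\<close>)
  then have "y \<in> dom_subdiff h" unfolding dom_subdiff_def by blast
  moreover have "h y \<le> h z"
  proof -
    have "ay + (norm (y - z))\<^sup>2 / (2 * lam) \<le> az" using Fy ay hz unfolding F_def by simp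
    moreover have "(norm (y - z))\<^sup>2 / (2 * lam) \<ge> 0" using lam by simp
    ultimately show ?thesis using ay hz by simp
  qed
  moreover have "norm (y - z) \<le> 2 * lam * norm b + sqrt (2 * lam * A)"
    using bound[OF Fy] by (simp add: dist_norm norm_minus_commute)
  ultimately show thesis using that unfolding A_def by blast
qed

lemma dom_subdiff_dense:
  fixes h :: "'a::euclidean_space \<Rightarrow> ereal"
  assumes conv: "convex_fun h" and lsc: "lsc_fun h" and nm: "\<forall>z. h z \<noteq> -\<infinity>"
    and "dom_subdiff h \<noteq> {}" and "h z < \<infinity>" and "e > 0"
  obtains y where "y \<in> dom_subdiff h" "h y \<le> h z" "dist y z < e"
proof -
  obtain p0 b where b: "b \<in> subdiff h p0" using assms(4) unfolding dom_subdiff_def by blast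
  obtain a0 where a0: "h p0 = ereal a0" using subdiff_finite[OF b nm] .
  obtain az where az: "h z = ereal az" using assms(5) nm by (cases "h z") auto
  define A where "A = az - a0 - b \<bullet> (z - p0)"
  have "((\<lambda>lam. 2 * lam * norm b + sqrt (2 * lam * A)) \<longlongrightarrow> 2 * 0 * norm b + sqrt (2 * 0 * A)) (at_right 0)"
    by (intro tendsto_intros)
  then have "\<forall>\<^sub>F lam in at_right 0. 0 < lam \<and> 2 * lam * norm b + sqrt (2 * lam * A) < e"
    using \<open>e > 0\<close> by (intro eventually_conj eventually_at_right_less) (simp add: order_tendstoD(2))
  then obtain lam where lam: "0 < lam" "2 * lam * norm b + sqrt (2 * lam * A) < e"
    using eventually_happens'[OF trivial_limit_at_right_real] by blast
  obtain y where "y \<in> dom_subdiff h" "h y \<le> h z" "norm (y - z) \<le> 2 * lam * norm b + sqrt (2 * lam * A)"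
    using proximal_point_exists[OF conv lsc nm b a0 az lam(1)] unfolding A_def by blast
  with lam show thesis using that by (simp add: dist_norm)
qed

lemma bregman_function_strongly_convex_edom:
  fixes N :: "'a::euclidean_space \<Rightarrow> real"
  assumes "is_norm N" and "bregman_function N X h gh"
  obtains K where "K > 0" and "\<And>x w. x \<in> dom_subdiff h \<Longrightarrow> h w < \<infinity> \<Longrightarrow>
      h x + ereal (gh x \<bullet> (w - x)) + ereal (K / 2 * (N (w - x))\<^sup>2) \<le> h w"
proof -
  have conv: "convex_fun h" and lsc: "lsc_fun h" and nm: "\<forall>z. h z \<noteq> -\<infinity>"
    and sel: "\<forall>x\<in>dom_subdiff h. gh x \<in> subdiff h x"
    using assms(2) unfolding bregman_function_def by auto
  obtain K where K: "K > 0" and strong: "\<forall>x\<in>dom_subdiff h. \<forall>x'\<in>dom_subdiff h.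
      h x + ereal (gh x \<bullet> (x' - x)) + ereal (K / 2 * (N (x' - x))\<^sup>2) \<le> h x'"
    using assms(2) unfolding bregman_function_def by auto
  have "h x + ereal (gh x \<bullet> (w - x)) + ereal (K / 2 * (N (w - x))\<^sup>2) \<le> h w"
    if x: "x \<in> dom_subdiff h" and w: "h w < \<infinity>" for x w
  proof -
    obtain ax where ax: "h x = ereal ax" using subdiff_finite sel x nm by metis
    obtain aw where aw: "h w = ereal aw" using w nm by (cases "h w") auto
    define \<phi> where "\<phi> y = ax + gh x \<bullet> (y - x) + K / 2 * (N (y - x))\<^sup>2" for y
    have "continuous_on UNIV (\<lambda>y. N (y - x))"
      by (intro continuous_on_compose2[OF is_norm_continuous[OF assms(1)]] continuous_intros) auto
    then have "closed {y. \<phi> y \<le> aw}"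
      unfolding \<phi>_def by (intro closed_Collect_le continuous_intros)
    moreover have "\<exists>y\<in>{y. \<phi> y \<le> aw}. dist y w < e" if e: "e > 0" for e
    proof -
      obtain y where y: "y \<in> dom_subdiff h" "h y \<le> h w" "dist y w < e"
        using dom_subdiff_dense[OF conv lsc nm _ w e] x by blast
      have "ereal (\<phi> y) \<le> h y" using strong x y(1) ax unfolding \<phi>_def by auto
      then have "\<phi> y \<le> aw" using y(2) aw by (metis ereal_less_eq(3) order_trans)
      with y(3) show ?thesis by blast
    qed
    ultimately have "\<phi> w \<le> aw" using closed_approachable by blast
    then show ?thesis using ax aw unfolding \<phi>_def by simp
  qed
  with K show thesis using that by blast
qed

lemma bregman_function_subdiff_surj:
  fixes N :: "'a::euclidean_space \<Rightarrow> real"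
  assumes "is_norm N" and "bregman_function N X h gh" and q: "q \<in> dom_subdiff h"
  obtains p where "c \<in> subdiff h p"
proof -
  have lsc: "lsc_fun h" and nm: "\<forall>z. h z \<noteq> -\<infinity>" and sel: "\<forall>x\<in>dom_subdiff h. gh x \<in> subdiff h x"
    using assms(2) unfolding bregman_function_def by auto
  obtain K where K: "K > 0" and strong: "\<And>w. h w < \<infinity> \<Longrightarrow>
      h q + ereal (gh q \<bullet> (w - q)) + ereal (K / 2 * (N (w - q))\<^sup>2) \<le> h w"
    using bregman_function_strongly_convex_edom[OF assms(1,2)] q by metis
  obtain m where m: "m > 0" "\<And>v. m * norm v \<le> N v" using is_norm_ge_norm[OF assms(1)] by blast
  obtain aq where aq: "h q = ereal aq" using subdiff_finite sel q nm by metis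
  define F where "F w = h w + ereal (- (c \<bullet> w))" for w
  define Kp where "Kp = K * m\<^sup>2 / 2"
  have Kp: "Kp > 0" unfolding Kp_def using K m by simp
  have lscF: "lsc_fun F" unfolding F_def by (rule lsc_fun_add_continuous[OF lsc]) (intro continuous_intros)
  have "dist q w \<le> norm (c - gh q) / Kp" if Fw: "F w \<le> F q" for w
  proof -
    obtain aw where aw: "h w = ereal aw" using Fw nm aq unfolding F_def by (cases "h w") auto
    define \<rho> where "\<rho> = norm (w - q)"
    have "(m * \<rho>)\<^sup>2 \<le> (N (w - q))\<^sup>2"
      using m unfolding \<rho>_def by (intro power_mono) auto
    then have "Kp * \<rho>\<^sup>2 \<le> K / 2 * (N (w - q))\<^sup>2"
      unfolding Kp_def using K by (simp add: power_mult_distrib)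
    moreover have "aq + gh q \<bullet> (w - q) + K / 2 * (N (w - q))\<^sup>2 \<le> aw"
      using strong[of w] aq aw by simp
    moreover have "aw - c \<bullet> w \<le> aq - c \<bullet> q" using Fw aw aq unfolding F_def by simp
    moreover have "(c - gh q) \<bullet> (w - q) \<le> norm (c - gh q) * \<rho>"
      unfolding \<rho>_def by (rule norm_cauchy_schwarz)
    ultimately have "Kp * \<rho>\<^sup>2 \<le> norm (c - gh q) * \<rho>"
      by (simp add: inner_diff_left inner_diff_right)
    then have "\<rho> \<le> norm (c - gh q) / Kp"
      using Kp by (cases "\<rho> = 0") (auto simp: \<rho>_def power2_eq_square field_simps)
    then show ?thesis by (simp add: \<rho>_def dist_norm norm_minus_commute)
  qed
  then obtain p where p: "\<And>w. F p \<le> F w" using lsc_fun_attains_min[OF lscF] by blast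
  obtain ap where "h p = ereal ap" using p[of q] nm aq unfolding F_def by (cases "h p") auto
  then have "c \<in> subdiff h p" using p unfolding F_def by (simp add: subdiff_iff_minimizer)
  then show thesis by (rule that)
qed

lemma dom_subdiff_approximates_segment:
  fixes h :: "'a::euclidean_space \<Rightarrow> ereal"
  assumes conv: "convex_fun h" and lsc: "lsc_fun h" and nm: "\<forall>z. h z \<noteq> -\<infinity>"
    and p: "p \<in> dom_subdiff h" and hq: "h q < \<infinity>"
  obtains Y where "\<forall>\<^sub>F s in at_right 0. Y s \<in> dom_subdiff h"
    and "((\<lambda>s. (1 / s) *\<^sub>R (Y s - p)) \<longlongrightarrow> q - p) (at_right 0)"
proof -
  define d where "d = q - p"
  obtain ap where ap: "h p = ereal ap" using p subdiff_finite[OF _ nm] unfolding dom_subdiff_def by blast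
  obtain aq where aq: "h q = ereal aq" using hq nm by (cases "h q") auto
  have "\<exists>y\<in>dom_subdiff h. dist y (p + s *\<^sub>R d) < s\<^sup>2" if s: "0 < s" "s < 1" for s
  proof -
    have "h (p + s *\<^sub>R d) \<le> ereal ((1 - s) * ap + s * aq)"
      using convex_funD_ereal[OF conv ap aq s] by (simp add: d_def algebra_simps)
    then have "h (p + s *\<^sub>R d) < \<infinity>" by (cases "h (p + s *\<^sub>R d)") auto
    moreover have "dom_subdiff h \<noteq> {}" "s\<^sup>2 > 0" using p s by auto
    ultimately show ?thesis using dom_subdiff_dense[OF conv lsc nm] by blast
  qed
  then obtain Y where Y: "\<And>s. 0 < s \<Longrightarrow> s < 1 \<Longrightarrow>
      Y s \<in> dom_subdiff h \<and> dist (Y s) (p + s *\<^sub>R d) < s\<^sup>2"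
    by metis
  have ev01: "\<forall>\<^sub>F s in at_right 0. 0 < s \<and> s < (1::real)"
    unfolding eventually_at_right_field by (intro exI[of _ 1]) auto
  have "\<forall>\<^sub>F s in at_right 0. norm ((1 / s) *\<^sub>R (Y s - p) - d) \<le> s"
    using ev01
  proof (rule eventually_mono)
    fix s :: real assume s: "0 < s \<and> s < 1"
    have "(1 / s) *\<^sub>R (Y s - p) - d = (1 / s) *\<^sub>R (Y s - (p + s *\<^sub>R d))"
      using s by (simp add: algebra_simps)
    then have "norm ((1 / s) *\<^sub>R (Y s - p) - d) * s < s\<^sup>2" using Y[of s] s by (simp add: dist_norm)
    with s show "norm ((1 / s) *\<^sub>R (Y s - p) - d) \<le> s" by (simp add: power2_eq_square)
  qed
  then have "((\<lambda>s. (1 / s) *\<^sub>R (Y s - p) - d) \<longlongrightarrow> 0) (at_right 0)"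
    by (rule Lim_null_comparison) (rule tendsto_ident_at)
  then have "((\<lambda>s. (1 / s) *\<^sub>R (Y s - p)) \<longlongrightarrow> d) (at_right 0)" by (simp add: LIM_zero_iff)
  moreover have "\<forall>\<^sub>F s in at_right 0. Y s \<in> dom_subdiff h" using ev01 Y by (auto elim: eventually_mono)
  ultimately show thesis using that unfolding d_def by blast
qed

lemma continuous_subdiff_selection_directional:
  fixes h :: "'a::euclidean_space \<Rightarrow> ereal"
  assumes conv: "convex_fun h" and lsc: "lsc_fun h" and nm: "\<forall>z. h z \<noteq> -\<infinity>"
    and sel: "\<forall>x\<in>dom_subdiff h. gh x \<in> subdiff h x"
    and cont: "continuous_on (dom_subdiff h) gh"
    and p: "p \<in> dom_subdiff h" and c: "c \<in> subdiff h p" and hq: "h q < \<infinity>"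
  shows "(gh p - c) \<bullet> (q - p) \<ge> 0"
proof -
  obtain Y where YD: "\<forall>\<^sub>F s in at_right 0. Y s \<in> dom_subdiff h"
    and V: "((\<lambda>s. (1 / s) *\<^sub>R (Y s - p)) \<longlongrightarrow> q - p) (at_right 0)"
    using dom_subdiff_approximates_segment[OF conv lsc nm p hq] by blast
  define V where "V s = (1 / s) *\<^sub>R (Y s - p)" for s
  have pos: "\<forall>\<^sub>F s in at_right 0. 0 < (s::real)" by (rule eventually_at_right_less)
  have "\<forall>\<^sub>F s in at_right 0. p + s *\<^sub>R V s = Y s"
    using pos by (rule eventually_mono) (simp add: V_def)
  moreover have "((\<lambda>s. p + s *\<^sub>R V s) \<longlongrightarrow> p + 0 *\<^sub>R (q - p)) (at_right 0)"
    using V unfolding V_def[symmetric] by (intro tendsto_intros)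
  ultimately have "(Y \<longlongrightarrow> p) (at_right 0)" by (simp add: tendsto_cong)
  then have "((\<lambda>s. gh (Y s)) \<longlongrightarrow> gh p) (at_right 0)"
    by (rule continuous_on_tendsto_compose[OF cont _ p YD])
  then have "((\<lambda>s. (gh (Y s) - c) \<bullet> V s) \<longlongrightarrow> (gh p - c) \<bullet> (q - p)) (at_right 0)"
    using V unfolding V_def[symmetric] by (intro tendsto_intros)
  moreover have "\<forall>\<^sub>F s in at_right 0. 0 \<le> (gh (Y s) - c) \<bullet> V s"
    using eventually_conj[OF pos YD]
  proof (rule eventually_mono)
    fix s :: real assume s: "0 < s \<and> Y s \<in> dom_subdiff h"
    then have "0 \<le> (gh (Y s) - c) \<bullet> (Y s - p)"
      using sel c by (intro subdiff_monotone[OF nm]) auto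
    also have "Y s - p = s *\<^sub>R V s" using s by (simp add: V_def)
    finally show "0 \<le> (gh (Y s) - c) \<bullet> V s" using s by (simp add: zero_le_mult_iff)
  qed
  ultimately show ?thesis by (simp add: tendsto_lowerbound)
qed

lemma prox_subdiff:
  fixes N :: "'a::euclidean_space \<Rightarrow> real"
  assumes "is_norm N" and "bregman_function N X h gh" and q: "q \<in> dom_subdiff h"
  shows "gh q + y \<in> subdiff h (prox X h gh q y)"
proof -
  define c where "c = gh q + y"
  have nm: "\<forall>z. h z \<noteq> -\<infinity>" and DX: "dom_subdiff h \<subseteq> X" and Xd: "X \<subseteq> edom h"
    and sel: "\<forall>x\<in>dom_subdiff h. gh x \<in> subdiff h x"
    using assms(2) unfolding bregman_function_def by auto
  obtain aq where aq: "h q = ereal aq" using subdiff_finite sel q nm by metis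
  have fin: "\<exists>a. h z = ereal a" if "z \<in> X" for z
    using that Xd nm unfolding edom_def by (cases "h z") auto
  have obj: "ereal (y \<bullet> (q - z)) + breg h gh z q =
      h z + ereal (- (c \<bullet> z)) + ereal (y \<bullet> q - aq + gh q \<bullet> q)"
    if "z \<in> X" for z
    using fin[OF that] aq unfolding breg_def c_def
    by (auto simp: inner_diff_right inner_add_left algebra_simps)
  obtain ps where cps: "c \<in> subdiff h ps" using bregman_function_subdiff_surj[OF assms] .
  obtain aps where aps: "h ps = ereal aps" using subdiff_finite[OF cps nm] .
  have psX: "ps \<in> X" using cps DX unfolding dom_subdiff_def by blast
  have psmin: "\<forall>w. h ps + ereal (- (c \<bullet> ps)) \<le> h w + ereal (- (c \<bullet> w))"
    using cps unfolding subdiff_iff_minimizer[of h ps aps c, OF aps] .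
  define P where "P x' \<longleftrightarrow> x' \<in> X \<and>
      (\<forall>z\<in>X. ereal (y \<bullet> (q - x')) + breg h gh x' q \<le> ereal (y \<bullet> (q - z)) + breg h gh z q)" for x'
  have "P ps"
    unfolding P_def
  proof (intro conjI ballI psX)
    fix z assume "z \<in> X"
    show "ereal (y \<bullet> (q - ps)) + breg h gh ps q \<le> ereal (y \<bullet> (q - z)) + breg h gh z q"
      unfolding obj[OF psX] obj[OF \<open>z \<in> X\<close>] using psmin by (intro add_right_mono) blast
  qed
  then have "P (prox X h gh q y)" unfolding prox_def P_def by (rule someI)
  define p where "p = prox X h gh q y"
  have pX: "p \<in> X" and "ereal (y \<bullet> (q - p)) + breg h gh p q \<le> ereal (y \<bullet> (q - ps)) + breg h gh ps q"
    using \<open>P (prox X h gh q y)\<close> psX unfolding P_def p_def by blast+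
  then have "h p + ereal (- (c \<bullet> p)) \<le> h ps + ereal (- (c \<bullet> ps))"
    unfolding obj[OF pX] obj[OF psX] by (simp add: ereal_add_le_add_iff2)
  then have "\<forall>w. h p + ereal (- (c \<bullet> p)) \<le> h w + ereal (- (c \<bullet> w))"
    using psmin by (meson order_trans)
  then show ?thesis
    using fin[OF pX] unfolding p_def c_def[symmetric] by (auto simp: subdiff_iff_minimizer)
qed

lemma le_mult_sqrt_imp_le:
  fixes S k :: real
  assumes "0 \<le> S" and "S \<le> k * sqrt (2 * S)"
  shows "S \<le> 2 * k\<^sup>2"
proof (cases "S = 0")
  case False
  have "S\<^sup>2 \<le> (k * sqrt (2 * S))\<^sup>2" using assms by (intro power_mono) auto
  also have "\<dots> = (2 * k\<^sup>2) * S" using assms(1) by (simp add: power_mult_distrib)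
  finally show ?thesis using assms(1) False by (simp add: power2_eq_square)
qed simp

lemma breg_symmetrized:
  assumes "\<forall>z. h z \<noteq> -\<infinity>" and "gh p \<in> subdiff h p" and "gh q \<in> subdiff h q"
  obtains Dqp Dpq where "breg h gh q p = ereal Dqp" "breg h gh p q = ereal Dpq"
    and "0 \<le> Dqp" "0 \<le> Dpq" and "Dqp + Dpq = (gh q - gh p) \<bullet> (q - p)"
proof -
  obtain ap aq where ap: "h p = ereal ap" and aq: "h q = ereal aq"
    using subdiff_finite assms by metis
  have "h p + ereal (gh p \<bullet> (q - p)) \<le> h q" "h q + ereal (gh q \<bullet> (p - q)) \<le> h p"
    using subdiffD[OF assms(2)] subdiffD[OF assms(3)] by blast+
  then show thesis
    using that[of "aq - ap - gh p \<bullet> (q - p)" "ap - aq - gh q \<bullet> (p - q)"] ap aq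
    unfolding breg_def by (simp add: inner_diff_left inner_diff_right algebra_simps)
qed

lemma prox_step_residual_bound:
  fixes N :: "'a::euclidean_space \<Rightarrow> real"
  assumes nN: "is_norm N" and br: "bregman_function N X h gh" and rc: "rel_continuous f gf h gh G"
    and q: "q \<in> dom_subdiff h" and \<gamma>: "\<gamma> > 0" and G: "G \<ge> 0"
  defines "p \<equiv> prox X h gh q (- (\<gamma> *\<^sub>R gf q))"
  shows "(sqrt (real_of_ereal (breg h gh q p + breg h gh p q)) / \<gamma>)\<^sup>2 \<le> 2 * G\<^sup>2"
proof -
  have conv: "convex_fun h" and lsc: "lsc_fun h" and nm: "\<forall>z. h z \<noteq> -\<infinity>"
    and DX: "dom_subdiff h \<subseteq> X" and Xd: "X \<subseteq> edom h"
    and sel: "\<forall>x\<in>dom_subdiff h. gh x \<in> subdiff h x" and cont: "continuous_on (dom_subdiff h) gh"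
    using br unfolding bregman_function_def by auto
  define c where "c = gh q - \<gamma> *\<^sub>R gf q"
  have c: "c \<in> subdiff h p"
    using prox_subdiff[OF nN br q, of "- (\<gamma> *\<^sub>R gf q)"] unfolding p_def c_def by simp
  then have pD: "p \<in> dom_subdiff h" unfolding dom_subdiff_def by blast
  have sel_pq: "gh p \<in> subdiff h p" "gh q \<in> subdiff h q" using sel pD q by blast+
  obtain aq where "h q = ereal aq" using subdiff_finite[OF sel_pq(2) nm] .
  then have dir: "(gh p - c) \<bullet> (q - p) \<ge> 0"
    by (intro continuous_subdiff_selection_directional[OF conv lsc nm sel cont pD c]) simp
  obtain Dqp Dpq where breg: "breg h gh q p = ereal Dqp" "breg h gh p q = ereal Dpq"
    and "0 \<le> Dqp" "0 \<le> Dpq" and sym: "Dqp + Dpq = (gh q - gh p) \<bullet> (q - p)"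
    using breg_symmetrized[OF nm sel_pq] by blast
  define S where "S = Dqp + Dpq"
  have "S = (gh q - gh p) \<bullet> (q - p)" unfolding S_def by (rule sym)
  also have "\<dots> \<le> \<gamma> * (gf q \<bullet> (q - p))"
    using dir unfolding c_def by (simp add: inner_diff_left algebra_simps)
  also have "\<dots> \<le> \<gamma> * (G * sqrt (2 * Dpq))"
  proof -
    have "p \<in> edom h" using pD DX Xd by blast
    with rc q have "gf q \<bullet> (q - p) \<le> G * sqrt (2 * real_of_ereal (breg h gh p q))"
      unfolding rel_continuous_def by blast
    with \<gamma> show ?thesis unfolding breg(2) by simp
  qed
  also have "\<dots> \<le> \<gamma> * G * sqrt (2 * S)"
    using \<gamma> G \<open>0 \<le> Dqp\<close> unfolding S_def by (simp add: mult_left_mono)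
  finally have "S \<le> 2 * (\<gamma> * G)\<^sup>2"
    using \<open>0 \<le> Dqp\<close> \<open>0 \<le> Dpq\<close> unfolding S_def by (intro le_mult_sqrt_imp_le) auto
  then show ?thesis
    using \<gamma> \<open>0 \<le> Dqp\<close> \<open>0 \<le> Dpq\<close> unfolding breg S_def
    by (simp add: power_divide power_mult_distrib field_simps)
qed

theorem lemma1:
  fixes N :: "'a::euclidean_space \<Rightarrow> real"
    and X :: "'a set"
    and f h :: "'a \<Rightarrow> ereal"
    and gf gh :: "'a \<Rightarrow> 'a"
    and G :: real
    and x :: "nat \<Rightarrow> 'a"
    and gam del :: "nat \<Rightarrow> real"
  assumes "is_norm N"
    and "convex X"
    and "proper_fun f" and "lsc_fun f" and "convex_fun f"
    and "edom f = X"
    and "\<exists>xs. \<forall>z. f xs \<le> f z"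
    and "\<forall>z\<in>dom_subdiff f. gf z \<in> subdiff f z"
    and "bregman_function N X h gh"
    and "G > 0"
    and "rel_continuous f gf h gh G"
    and "x 0 \<in> dom_subdiff h" and "x 1 \<in> dom_subdiff h" and "x 0 \<noteq> x 1"
    and "del 0 = sqrt (real_of_ereal (breg h gh (x 0) (x 1) + breg h gh (x 1) (x 0)))"
    and "\<forall>t\<ge>1. gam t = 1 / sqrt (\<Sum>s<t. (del s)\<^sup>2)"
    and "\<forall>t\<ge>1. x (t + 1) = prox X h gh (x t) (- (gam t *\<^sub>R gf (x t)))"
    and "\<forall>t\<ge>1. del t = sqrt (real_of_ereal (breg h gh (x t) (x (t + 1)) + breg h gh (x (t + 1)) (x t))) / gam t"
  shows "\<forall>t\<ge>1. (del t)\<^sup>2 \<le> 2 * G\<^sup>2"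
proof (intro allI impI)
  note nN = assms(1) and br = assms(9) and rc = assms(11)
    and gam = assms(16) and step = assms(17) and del = assms(18)
  have dom: "x t \<in> dom_subdiff h" if "t \<ge> 1" for t
    using that
  proof (induction t rule: nat_induct_at_least)
    case (Suc n)
    then show ?case
      using prox_subdiff[OF nN br Suc.IH] step unfolding dom_subdiff_def by auto
  qed (use assms(13) in simp)
  fix t :: nat
  assume t: "t \<ge> 1"
  have "gam t \<ge> 0" using gam t by (simp add: sum_nonneg)
  show "(del t)\<^sup>2 \<le> 2 * G\<^sup>2"
  proof (cases "gam t = 0")
    case True
    \<comment> \<open>division by zero makes del t = 0\<close>
    then show ?thesis using del t by simp
  next
    case False
    with \<open>gam t \<ge> 0\<close> have "gam t > 0" by simp
    from prox_step_residual_bound[OF nN br rc dom[OF t] this] assms(10)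
    show ?thesis using step del t by simp
  qed
qed

end
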